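(* For every integer $n\ge1$ there exists an infinite word $w_n$ over an alphabet $\Sigma_n$ of $2n$ letters with $\mathrm{ACE}(w_n) = 1$ such that $\mathrm{ACE}_{\mathcal{I}}(w_n)\ge n$, where $\mathrm{ACE}_{\mathcal{I}}$ is taken with $\Sigma=\Sigma_n$ and $\Gamma$ any finite alphabet with at least two letters.
   Context: $\mathrm{Fact}_n(w)$ is the set of length-$n$ factors of $w$. For a nonempty word $v$ and integer $p\ge0$, $v^{p/|v|}$ is the prefix of length $p$ of $vvv\cdots$. For a nonempty finite word $u$, $\mathrm{E}(u) = \sup\{ r \in \mathbb{Q} : u = v^r \text{ for some nonempty } v\}$. For an infinite word $w$, $\mathrm{ACE}(w) = \limsup_{m\to\infty}\sup\{\mathrm{E}(u) : u\in\mathrm{Fact}_m(w)\}$. $\mathcal{I}$ is the set of injective morphisms $\Sigma^*\to\Gamma^*$ and $\mathrm{ACE}_{\mathcal{I}}(w) = \sup\{\mathrm{ACE}(h(w)) : h\in\mathcal{I}\}$. *)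

theory Defs
  imports Main "HOL-Library.Extended_Real" "HOL-Library.Liminf_Limsup"
begin

definition Fact :: "nat \<Rightarrow> (nat \<Rightarrow> 'a) \<Rightarrow> 'a list set" where
  "Fact n w = {map (\<lambda>j. w (i + j)) [0..<n] | i. True}"

text \<open>v^(p/|v|): prefix of length p of vvv...\<close>
definition frac_pow :: "'a list \<Rightarrow> nat \<Rightarrow> 'a list" where
  "frac_pow v p = take p (concat (replicate p v))"

definition Exp :: "'a list \<Rightarrow> real" where
  "Exp u = Sup {r. \<exists>v p. v \<noteq> [] \<and> r = real p / real (length v) \<and> u = frac_pow v p}"

definition ACE :: "(nat \<Rightarrow> 'a) \<Rightarrow> ereal" where
  "ACE w = limsup (\<lambda>m. SUP u \<in> Fact m w. ereal (Exp u))"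

definition morph :: "('a \<Rightarrow> 'b list) \<Rightarrow> 'a list \<Rightarrow> 'b list" where
  "morph f u = concat (map f u)"

text \<open>The image h(w) of an infinite word under a nonerasing morphism:
  its i-th letter is the i-th letter of h(w_0 ... w_i).\<close>
definition morph_inf :: "('a \<Rightarrow> 'b list) \<Rightarrow> (nat \<Rightarrow> 'a) \<Rightarrow> nat \<Rightarrow> 'b" where
  "morph_inf f w i = morph f (map w [0..<Suc i]) ! i"

definition inj_morphs :: "'a set \<Rightarrow> 'b set \<Rightarrow> ('a \<Rightarrow> 'b list) set" where
  "inj_morphs \<Sigma> \<Gamma> = {f. (\<forall>a\<in>\<Sigma>. set (f a) \<subseteq> \<Gamma>) \<and> inj_on (morph f) (lists \<Sigma>)}"

definition ACE_I :: "'a set \<Rightarrow> 'b set \<Rightarrow> (nat \<Rightarrow> 'a) \<Rightarrow> ereal" where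
  "ACE_I \<Sigma> \<Gamma> w = (SUP f \<in> inj_morphs \<Sigma> \<Gamma>. ACE (morph_inf f w))"

end

theory Submission
  imports Defs "HOL-Library.Log_Nat" "HOL-Real_Asymp.Real_Asymp"
begin

(*
  Counting binary words that avoid repetitions of period p and length
  rep_bound p = 3 + 4 floorlog 2 p shows that their number grows at least by the factor 3/2
  per letter: a one-letter extension that fails ends in such a repetition and is therefore
  determined by a shorter good word, and the sum over p of (2/3)^(rep_bound p - 1) is at
  most 4/9.  Koenig's lemma then gives an infinite binary word x in which every repetition
  of period p is shorter than rep_bound p = O(log p).

  The word w_n is read in rounds: round k consists of n blocks of length k + 1, and block i
  spells x_T ... x_(T+k), with T = 1 + ... + k, in the letters 2i and 2i + 1.  Along w_n the
  position in x advances by one, except at the start of a block other than the first of its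
  round.  A repetition of period p contains at most one such block start, because after it
  both copies run through blocks of the same index in different rounds, whose lengths
  differ; on either side of it x itself is repeated with a period at most p.  Hence all
  repetitions of period p in w_n are shorter than 2 rep_bound p = o(p), and ACE(w_n) = 1.

  The morphism sending 2i + c to g^(n-1-i) e c' g^i, where c' is e or g according to c, codes
  block i as the code of block 0 shifted i places to the right.  So the image of round k is
  g^(n-1) U^n a for a word U of length (n+1)(k+1) - 1, a factor of exponent n and unbounded
  length.
*)

section \<open>Repetitions and critical exponents\<close>

definition bounded_reps :: "(nat \<Rightarrow> nat) \<Rightarrow> (nat \<Rightarrow> 'a) \<Rightarrow> bool" where
  "bounded_reps f w \<longleftrightarrow> (\<forall>p i l. 0 < p \<longrightarrow> (\<forall>t<l. w (i + t) = w (i + p + t)) \<longrightarrow> l < f p)"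

lemma nth_concat_uniform:
  assumes "\<forall>y\<in>set ys. length (f y) = L" "q < L * length ys"
  shows "concat (map f ys) ! q = f (ys ! (q div L)) ! (q mod L)"
  using assms
proof (induction ys arbitrary: q)
  case (Cons y ys)
  show ?case
  proof (cases "q < L")
    case False
    then obtain q' where q: "q = L + q'" by (metis le_add_diff_inverse not_less)
    have "0 < L" using Cons.prems by (cases L) auto
    then have "q div L = Suc (q' div L)" "q mod L = q' mod L" unfolding q by (simp_all add: div_add_self1)
    with Cons q show ?thesis by (auto simp: nth_append)
  qed (use Cons.prems in \<open>simp add: nth_append\<close>)
qed simp

lemma length_frac_pow: "v \<noteq> [] \<Longrightarrow> length (frac_pow v p) = p"
  by (cases v) (auto simp: frac_pow_def length_concat sum_list_replicate)

lemma nth_frac_pow: "v \<noteq> [] \<Longrightarrow> t < p \<Longrightarrow> frac_pow v p ! t = v ! (t mod length v)"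
proof -
  assume v: "v \<noteq> []" and t: "t < p"
  have "t div length v < p" using t by (meson div_le_dividend le_less_trans)
  moreover have "t < length v * p" using t v by (cases "length v") auto
  ultimately show ?thesis
    using nth_concat_uniform[of "replicate p v" "\<lambda>y. y" "length v" t] t
    unfolding frac_pow_def by simp
qed

lemma frac_pow_mult_length: "frac_pow v (k * length v) = concat (replicate k v)"
proof (cases "v = []")
  case False
  then have "k * length v = k + (k * length v - k)" by (cases v) auto
  then have "concat (replicate (k * length v) v) = concat (replicate k v) @ concat (replicate (k * length v - k) v)"
    by (metis concat_append replicate_add)
  then show ?thesis unfolding frac_pow_def by (simp add: length_concat sum_list_replicate)
qed (simp add: frac_pow_def)

lemma frac_pow_length_self: "frac_pow u (length u) = u"
  using frac_pow_mult_length[where k = 1 and v = u] by simp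

lemma nth_frac_pow_add_length:
  assumes "v \<noteq> []" "u = frac_pow v (length u)" "t + length v < length u"
  shows "u ! t = u ! (t + length v)"
proof -
  have "frac_pow v (length u) ! t = frac_pow v (length u) ! (t + length v)"
    using assms(1,3) by (simp add: nth_frac_pow)
  with assms(2)[symmetric] show ?thesis by simp
qed

lemma bdd_above_Exp_set:
  "bdd_above {r. \<exists>v p. v \<noteq> [] \<and> r = real p / real (length v) \<and> u = frac_pow v p}"
proof (rule bdd_aboveI)
  fix r assume "r \<in> {r. \<exists>v p. v \<noteq> [] \<and> r = real p / real (length v) \<and> u = frac_pow v p}"
  then obtain v p where v: "v \<noteq> []" "r = real p / real (length v)" "u = frac_pow v p" by auto
  then have "p = length u" by (simp add: length_frac_pow)
  moreover have "real (length u) / real (length v) \<le> real (length u) / 1"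
    using v(1) by (intro divide_left_mono) (auto simp: Suc_le_eq)
  ultimately show "r \<le> real (length u)" using v(2) by simp
qed

lemma Exp_ge_length_ratio:
  "v \<noteq> [] \<Longrightarrow> u = frac_pow v (length u) \<Longrightarrow> real (length u) / real (length v) \<le> Exp u"
  unfolding Exp_def by (rule cSup_upper[OF _ bdd_above_Exp_set]) auto

lemma one_le_Exp: "u \<noteq> [] \<Longrightarrow> 1 \<le> Exp u"
  using Exp_ge_length_ratio[of u u] by (simp add: frac_pow_length_self)

lemma Exp_le:
  assumes "u \<noteq> []" "1 \<le> B"
    and periods: "\<And>v. v \<noteq> [] \<Longrightarrow> length v < length u \<Longrightarrow> u = frac_pow v (length u) \<Longrightarrow>
      real (length u) / real (length v) \<le> B"
  shows "Exp u \<le> B"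
  unfolding Exp_def
proof (rule cSup_least)
  have "real (length u) / real (length u) \<in>
      {r. \<exists>v p. v \<noteq> [] \<and> r = real p / real (length v) \<and> u = frac_pow v p}"
    by (intro CollectI exI[of _ u] exI[of _ "length u"]) (simp add: assms(1) frac_pow_length_self)
  then show "{r. \<exists>v p. v \<noteq> [] \<and> r = real p / real (length v) \<and> u = frac_pow v p} \<noteq> {}"
    by blast
next
  fix r assume "r \<in> {r. \<exists>v p. v \<noteq> [] \<and> r = real p / real (length v) \<and> u = frac_pow v p}"
  then obtain v p where v: "v \<noteq> []" "r = real p / real (length v)" "u = frac_pow v p" by auto
  then have p: "p = length u" by (simp add: length_frac_pow)
  show "r \<le> B"
  proof (cases "length v < length u")
    case True
    have "u = frac_pow v (length u)" using v(3) unfolding p[symmetric] .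
    from periods[OF v(1) True this] show ?thesis using v(2) p by simp
  next
    case False
    then have "r \<le> 1" using v(1,2) p by (simp add: divide_le_eq)
    with assms(2) show ?thesis by simp
  qed
qed

lemma le_ACE:
  assumes "\<And>N. \<exists>m\<ge>N. \<exists>u\<in>Fact m w. r \<le> Exp u"
  shows "ereal r \<le> ACE w"
  unfolding ACE_def limsup_INF_SUP
proof (rule INF_greatest)
  fix N
  obtain m u where "N \<le> m" "u \<in> Fact m w" "r \<le> Exp u" using assms by blast
  then show "ereal r \<le> (SUP m\<in>{N..}. SUP u\<in>Fact m w. ereal (Exp u))"
    by (intro SUP_upper2[of m] SUP_upper2[of u]) auto
qed

lemma ACE_le_one:
  assumes reps: "bounded_reps f w" and "mono f" and sublinear: "(\<lambda>p. real (f p) / real p) \<longlonglongrightarrow> 0"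
  shows "ACE w \<le> 1"
proof (rule ereal_le_epsilon2)
  fix e :: real assume "0 < e"
  from order_tendstoD(2)[OF sublinear \<open>0 < e\<close>] obtain p0 where p0: "\<And>p. p \<ge> p0 \<Longrightarrow> real (f p) / real p < e"
    unfolding eventually_sequentially by blast
  have Exp_bound: "Exp u \<le> 1 + e" if "p0 + f p0 < m" "u \<in> Fact m w" for m u
  proof -
    from that obtain i where u: "u = map (\<lambda>j. w (i + j)) [0..<m]" unfolding Fact_def by auto
    show ?thesis
    proof (rule Exp_le)
      fix v assume v: "v \<noteq> []" "length v < length u" "u = frac_pow v (length u)"
      define p where "p = length v"
      have "0 < p" using v(1) unfolding p_def by simp
      have "w (i + t) = w (i + p + t)" if "t < m - p" for t
      proof -
        have "length u = m" using u by simp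
        with that v(2) have "t + p < m" unfolding p_def by simp
        moreover from this \<open>length u = m\<close> have "u ! t = u ! (t + p)"
          unfolding p_def by (intro nth_frac_pow_add_length[OF v(1) v(3)]) simp
        ultimately show ?thesis using u by (simp add: ac_simps)
      qed
      with reps \<open>0 < p\<close> have short: "m - p < f p" unfolding bounded_reps_def by blast
      have "p0 \<le> p"
      proof (rule ccontr)
        assume "\<not> p0 \<le> p"
        then have "f p \<le> f p0" using \<open>mono f\<close> by (simp add: monoD)
        with short that(1) \<open>\<not> p0 \<le> p\<close> show False by linarith
      qed
      with p0 \<open>0 < p\<close> have "real (f p) < e * real p" by (simp add: divide_less_eq)
      with short have "real m < (1 + e) * real p" by (simp add: algebra_simps)
      then show "real (length u) / real (length v) \<le> 1 + e"
        using \<open>0 < p\<close> unfolding p_def[symmetric] u by (simp add: divide_le_eq)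
    qed (use that \<open>0 < e\<close> u in auto)
  qed
  then have "(SUP u\<in>Fact m w. ereal (Exp u)) \<le> ereal (1 + e)" if "p0 + f p0 < m" for m
    using that by (intro SUP_least) simp
  then have "limsup (\<lambda>m. SUP u\<in>Fact m w. ereal (Exp u)) \<le> ereal (1 + e)"
    by (intro Limsup_bounded eventually_mono[OF eventually_gt_at_top])
  then show "ACE w \<le> 1 + ereal e" unfolding ACE_def by (simp add: add.commute)
qed

lemma ACE_eq_one:
  assumes "bounded_reps f w" "mono f" "(\<lambda>p. real (f p) / real p) \<longlonglongrightarrow> 0"
  shows "ACE w = 1"
proof (rule antisym)
  show "ACE w \<le> 1" using ACE_le_one[OF assms] .
  have "map (\<lambda>j. w (0 + j)) [0..<Suc N] \<in> Fact (Suc N) w" for N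
    unfolding Fact_def by blast
  then have "\<exists>m\<ge>N. \<exists>u\<in>Fact m w. 1 \<le> Exp u" for N
    by (intro exI[of _ "Suc N"] conjI bexI[of _ "map (\<lambda>j. w (0 + j)) [0..<Suc N]"] one_le_Exp) auto
  from le_ACE[OF this] show "1 \<le> ACE w" by (simp add: one_ereal_def)
qed

section \<open>A binary word with logarithmically short repetitions\<close>

definition rep_bound :: "nat \<Rightarrow> nat" where
  "rep_bound p = 3 + 4 * floorlog 2 p"

lemma rep_bound_mono: "mono rep_bound"
  unfolding rep_bound_def by (intro monoI) (simp add: floorlog_mono)

lemma rep_bound_pos: "0 < rep_bound p"
  by (simp add: rep_bound_def)

lemma rep_bound_term_le:
  assumes "0 < p"
  shows "(2/3::real) ^ (rep_bound p - 1) \<le> (4/9) / (real p * (real p + 1))"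
proof -
  define j where "j = floorlog 2 p"
  have "p < 2 ^ j" using floorlog_bounds[OF assms] unfolding j_def by simp
  then have "p * (p + 1) \<le> 2 ^ j * 2 ^ j" by (intro mult_le_mono) auto
  also have "\<dots> = 4 ^ j" by (simp flip: power_mult_distrib)
  finally have "real (p * (p + 1)) \<le> real (4 ^ j)" by (simp only: of_nat_le_iff)
  then have pj: "real p * (real p + 1) \<le> 4 ^ j" by (simp add: algebra_simps)
  have "(2/3::real) ^ (rep_bound p - 1) = (4/9) * ((2/3) ^ 4) ^ j"
    unfolding rep_bound_def j_def by (simp add: power_add power_mult[symmetric])
  also have "\<dots> \<le> (4/9) * (1/4) ^ j"
    by (intro mult_left_mono power_mono) (simp_all add: eval_nat_numeral)
  also have "\<dots> = (4/9) / 4 ^ j" by (simp add: power_divide)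
  also have "\<dots> \<le> (4/9) / (real p * (real p + 1))"
    using pj assms by (intro divide_left_mono) auto
  finally show ?thesis .
qed

lemma sum_inverse_consecutive_products:
  "(\<Sum>p=1..M. 1 / (real p * (real p + 1))) = real M / (real M + 1)"
proof (induction M)
  case (Suc M)
  have "(\<Sum>p=1..Suc M. 1 / (real p * (real p + 1))) = real M / (real M + 1) + 1 / ((real M + 1) * (real M + 2))"
    using Suc.IH by (simp add: add.commute)
  also have "\<dots> = real (Suc M) / (real (Suc M) + 1)" by (simp add: divide_simps) (simp add: algebra_simps)
  finally show ?case .
qed simp

lemma sum_rep_bound_le: "(\<Sum>p=1..M. (2/3::real) ^ (rep_bound p - 1)) \<le> 4/9"
proof -
  have "(\<Sum>p=1..M. (2/3::real) ^ (rep_bound p - 1)) \<le> (\<Sum>p=1..M. (4/9) * (1 / (real p * (real p + 1))))"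
    by (intro sum_mono) (use rep_bound_term_le in auto)
  also have "\<dots> = (4/9) * (real M / (real M + 1))"
    by (simp only: sum_distrib_left[symmetric] sum_inverse_consecutive_products)
  also have "\<dots> \<le> 4/9" by (simp add: divide_le_eq)
  finally show ?thesis .
qed

lemma rep_bound_sublinear: "(\<lambda>p. real (rep_bound p) / real p) \<longlonglongrightarrow> 0"
proof (rule tendsto_sandwich[where f = "\<lambda>_. 0" and h = "\<lambda>p. (7 + 4 * log 2 (real p)) / real p"])
  have "real (rep_bound p) \<le> 7 + 4 * log 2 (real p)" if "0 < p" for p
  proof -
    have "2 ^ (floorlog 2 p - 1) \<le> p" using floorlog_bounds[OF that] by simp
    then have "real (floorlog 2 p - 1) \<le> log 2 (real p)" by (rule le_log2_of_power)
    then show ?thesis unfolding rep_bound_def by linarith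
  qed
  then show "\<forall>\<^sub>F p in sequentially. real (rep_bound p) / real p \<le> (7 + 4 * log 2 (real p)) / real p"
    by (intro eventually_mono[OF eventually_gt_at_top[of 0]]) (simp add: divide_right_mono)
  show "(\<lambda>p. (7 + 4 * log 2 (real p)) / real p) \<longlonglongrightarrow> 0" by real_asymp
qed simp_all

definition rep_free :: "'a list \<Rightarrow> bool" where
  "rep_free u \<longleftrightarrow> (\<forall>i p. 0 < p \<longrightarrow> i + p + rep_bound p \<le> length u \<longrightarrow>
     \<not> (\<forall>t<rep_bound p. u ! (i + t) = u ! (i + p + t)))"

definition rep_free_words :: "nat \<Rightarrow> bool list set" where
  "rep_free_words N = {u. length u = N \<and> rep_free u}"

lemma finite_rep_free_words: "finite (rep_free_words N)"
  using finite_lists_length_eq[of "UNIV :: bool set" N] unfolding rep_free_words_def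
  by (auto intro: finite_subset)

lemma rep_free_Nil: "rep_free []"
  by (simp add: rep_free_def rep_bound_def)

lemma rep_free_take: "rep_free u \<Longrightarrow> rep_free (take k u)"
  unfolding rep_free_def
proof (intro allI impI notI)
  fix i p assume "\<forall>i p. 0 < p \<longrightarrow> i + p + rep_bound p \<le> length u \<longrightarrow>
      \<not> (\<forall>t<rep_bound p. u ! (i + t) = u ! (i + p + t))"
    and p: "0 < p" "i + p + rep_bound p \<le> length (take k u)"
    and rep: "\<forall>t<rep_bound p. take k u ! (i + t) = take k u ! (i + p + t)"
  moreover from p(2) have "i + p + rep_bound p \<le> length u" by simp
  moreover from p(2) rep have "\<forall>t<rep_bound p. u ! (i + t) = u ! (i + p + t)" by auto
  ultimately show False by blast
qed

lemma rep_free_snoc_suffix: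
  assumes "rep_free u" "\<not> rep_free (u @ [c])"
  obtains p where "0 < p" "p + rep_bound p \<le> Suc (length u)"
    "\<forall>t<rep_bound p. (u @ [c]) ! (Suc (length u) - rep_bound p - p + t) =
                     (u @ [c]) ! (Suc (length u) - rep_bound p + t)"
proof -
  from assms(2) obtain i p where ip: "0 < p" "i + p + rep_bound p \<le> Suc (length u)"
    "\<forall>t<rep_bound p. (u @ [c]) ! (i + t) = (u @ [c]) ! (i + p + t)"
    unfolding rep_free_def by auto
  have "i + p + rep_bound p = Suc (length u)"
  proof (rule ccontr)
    assume "i + p + rep_bound p \<noteq> Suc (length u)"
    then have "i + p + rep_bound p \<le> length u" using ip(2) by simp
    moreover from this have "\<forall>t<rep_bound p. u ! (i + t) = u ! (i + p + t)"
      using ip(3) by (auto simp: nth_append)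
    ultimately show False using assms(1) ip(1) unfolding rep_free_def by blast
  qed
  then have "i = Suc (length u) - rep_bound p - p" "i + p = Suc (length u) - rep_bound p" by auto
  with ip show thesis by (intro that[of p]) auto
qed

lemma binary_koenig:
  fixes P :: "bool list \<Rightarrow> bool"
  assumes take_closed: "\<And>u k. P u \<Longrightarrow> P (take k u)"
    and unbounded: "\<And>N. \<exists>u. length u = N \<and> P u"
  shows "\<exists>x. \<forall>k. P (map x [0..<k])"
proof -
  define extendable where
    "extendable u \<longleftrightarrow> (\<forall>N. \<exists>v. P v \<and> N \<le> length v \<and> take (length u) v = u)" for u
  have "extendable []" unfolding extendable_def by (metis unbounded order.refl take_0 list.size(3))
  have "\<exists>c. extendable (u @ [c])" if "extendable u" for u
  proof (rule ccontr)
    assume "\<nexists>c. extendable (u @ [c])"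
    then obtain N1 N2 where
      "\<forall>v. P v \<and> N1 \<le> length v \<longrightarrow> take (Suc (length u)) v \<noteq> u @ [True]"
      "\<forall>v. P v \<and> N2 \<le> length v \<longrightarrow> take (Suc (length u)) v \<noteq> u @ [False]"
      unfolding extendable_def by (metis length_append_singleton)
    moreover obtain v where "P v" "max N1 N2 + Suc (length u) \<le> length v" "take (length u) v = u"
      using \<open>extendable u\<close> unfolding extendable_def by blast
    moreover from this have "take (Suc (length u)) v = u @ [v ! length u]"
      by (simp add: take_Suc_conv_app_nth)
    ultimately show False by (cases "v ! length u") auto
  qed
  then obtain c where c: "\<And>u. extendable u \<Longrightarrow> extendable (u @ [c u])" by metis
  define pre where "pre k = ((\<lambda>u. u @ [c u]) ^^ k) []" for k
  have pre_ext: "extendable (pre k)" for k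
    by (induction k) (simp_all add: pre_def \<open>extendable []\<close> c)
  have "pre k = map (\<lambda>i. c (pre i)) [0..<k]" for k
    by (induction k) (simp_all add: pre_def)
  moreover have "P (pre k)" for k
  proof -
    obtain v where "P v" "take (length (pre k)) v = pre k"
      using pre_ext[of k] unfolding extendable_def by blast
    then show ?thesis using take_closed by metis
  qed
  ultimately show ?thesis by metis
qed

lemma eq_if_take_eq_periodic_tail:
  assumes len: "length v = length v'" and pre: "take m v = take m v'" and p: "0 < p" "p \<le> m"
    and per: "\<forall>t. m + t < length v \<longrightarrow> v ! (m - p + t) = v ! (m + t)"
    and per': "\<forall>t. m + t < length v' \<longrightarrow> v' ! (m - p + t) = v' ! (m + t)"
  shows "v = v'"
proof (rule nth_equalityI[OF len])
  fix k assume "k < length v"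
  then show "v ! k = v' ! k"
  proof (induction k rule: less_induct)
    case (less k)
    show ?case
    proof (cases "k < m")
      case True
      then show ?thesis using pre by (metis nth_take)
    next
      case False
      then obtain t where t: "k = m + t" by (metis le_add_diff_inverse not_less)
      have "v ! k = v ! (m - p + t)" using per less.prems t by simp
      also have "\<dots> = v' ! (m - p + t)" using less t p by simp
      also have "\<dots> = v' ! k" using per' less.prems t len by simp
      finally show ?thesis .
    qed
  qed
qed

definition words_ending_in_rep :: "nat \<Rightarrow> nat \<Rightarrow> bool list set" where
  "words_ending_in_rep N p = {v. length v = Suc N \<and> rep_free (take (Suc N - rep_bound p) v) \<and>
     (\<forall>t<rep_bound p. v ! (Suc N - rep_bound p - p + t) = v ! (Suc N - rep_bound p + t))}"

lemma card_words_ending_in_rep: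
  assumes "0 < p" "p + rep_bound p \<le> Suc N"
  shows "card (words_ending_in_rep N p) \<le> card (rep_free_words (Suc N - rep_bound p))"
proof -
  let ?m = "Suc N - rep_bound p"
  have "inj_on (take ?m) (words_ending_in_rep N p)"
  proof (rule inj_onI)
    fix v v' assume "v \<in> words_ending_in_rep N p" "v' \<in> words_ending_in_rep N p"
      "take ?m v = take ?m v'"
    then show "v = v'"
      using assms by (intro eq_if_take_eq_periodic_tail[of v v' ?m p])
        (auto simp: words_ending_in_rep_def)
  qed
  moreover have "take ?m ` words_ending_in_rep N p \<subseteq> rep_free_words ?m"
    unfolding words_ending_in_rep_def rep_free_words_def by auto
  ultimately show ?thesis by (rule card_inj_on_le[OF _ _ finite_rep_free_words])
qed

lemma finite_words_ending_in_rep: "finite (words_ending_in_rep N p)"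
  using finite_lists_length_eq[of "UNIV :: bool set" "Suc N"] unfolding words_ending_in_rep_def
  by (auto intro: finite_subset)

lemma card_rep_free_words_Suc:
  "2 * card (rep_free_words N) \<le> card (rep_free_words (Suc N)) +
     (\<Sum>p | 0 < p \<and> p + rep_bound p \<le> Suc N. card (rep_free_words (Suc N - rep_bound p)))"
proof -
  define R where "R = {p. 0 < p \<and> p + rep_bound p \<le> Suc N}"
  have "finite R" unfolding R_def by (rule finite_subset[of _ "{..Suc N}"]) auto
  have snoc: "u @ [c] \<in> rep_free_words (Suc N) \<union> (\<Union>p\<in>R. words_ending_in_rep N p)"
    if u: "u \<in> rep_free_words N" for u c
  proof (cases "rep_free (u @ [c])")
    case True
    with u show ?thesis unfolding rep_free_words_def by simp
  next
    case False
    from u have "rep_free u" "length u = N" unfolding rep_free_words_def by auto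
    from rep_free_snoc_suffix[OF this(1) False] obtain p where p: "0 < p" "p + rep_bound p \<le> Suc N"
      "\<forall>t<rep_bound p. (u @ [c]) ! (Suc N - rep_bound p - p + t) = (u @ [c]) ! (Suc N - rep_bound p + t)"
      unfolding \<open>length u = N\<close> by blast
    have "take (Suc N - rep_bound p) (u @ [c]) = take (Suc N - rep_bound p) u"
      using p rep_bound_pos[of p] \<open>length u = N\<close> by simp
    with p \<open>rep_free u\<close> \<open>length u = N\<close> have "u @ [c] \<in> words_ending_in_rep N p"
      unfolding words_ending_in_rep_def by (simp add: rep_free_take)
    with p show ?thesis unfolding R_def by blast
  qed
  have "inj_on (\<lambda>(u, c). u @ [c]) (rep_free_words N \<times> (UNIV :: bool set))"
    by (rule inj_onI) auto
  then have "2 * card (rep_free_words N) = card ((\<lambda>(u, c). u @ [c]) ` (rep_free_words N \<times> UNIV))"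
    by (simp add: card_image card_cartesian_product)
  also have "\<dots> \<le> card (rep_free_words (Suc N) \<union> (\<Union>p\<in>R. words_ending_in_rep N p))"
    by (rule card_mono[OF _ image_subsetI])
      (use snoc finite_rep_free_words finite_words_ending_in_rep \<open>finite R\<close> in auto)
  also have "\<dots> \<le> card (rep_free_words (Suc N)) + (\<Sum>p\<in>R. card (words_ending_in_rep N p))"
    by (intro order.trans[OF card_Un_le] add_left_mono card_UN_le \<open>finite R\<close>)
  also have "\<dots> \<le> card (rep_free_words (Suc N)) + (\<Sum>p\<in>R. card (rep_free_words (Suc N - rep_bound p)))"
    by (intro add_left_mono sum_mono card_words_ending_in_rep) (auto simp: R_def)
  finally show ?thesis unfolding R_def .
qed

lemma rep_free_words_growth_step:
  assumes decay: "\<forall>m\<le>N. real (card (rep_free_words m)) \<le> (2/3) ^ (N - m) * real (card (rep_free_words N))"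
  shows "3/2 * real (card (rep_free_words N)) \<le> real (card (rep_free_words (Suc N)))"
proof -
  define a where "a m = real (card (rep_free_words m))" for m
  define R where "R = {p. 0 < p \<and> p + rep_bound p \<le> Suc N}"
  have "R \<subseteq> {1..Suc N}" unfolding R_def by auto
  have "real (2 * card (rep_free_words N)) \<le>
      real (card (rep_free_words (Suc N)) + (\<Sum>p\<in>R. card (rep_free_words (Suc N - rep_bound p))))"
    using card_rep_free_words_Suc[of N] unfolding R_def by (simp only: of_nat_le_iff)
  then have "2 * a N \<le> a (Suc N) + (\<Sum>p\<in>R. a (Suc N - rep_bound p))"
    unfolding a_def by simp
  also have "(\<Sum>p\<in>R. a (Suc N - rep_bound p)) \<le> (\<Sum>p\<in>R. (2/3) ^ (rep_bound p - 1) * a N)"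
  proof (rule sum_mono)
    fix p assume "p \<in> R"
    then have le: "Suc N - rep_bound p \<le> N" and diff: "N - (Suc N - rep_bound p) = rep_bound p - 1"
      using rep_bound_pos[of p] unfolding R_def by auto
    show "a (Suc N - rep_bound p) \<le> (2/3) ^ (rep_bound p - 1) * a N"
      using decay[rule_format, OF le] unfolding diff a_def .
  qed
  also have "\<dots> \<le> (\<Sum>p=1..Suc N. (2/3) ^ (rep_bound p - 1)) * a N"
    unfolding sum_distrib_right[symmetric]
    by (intro mult_right_mono sum_mono2 \<open>R \<subseteq> {1..Suc N}\<close>) (auto simp: a_def)
  also have "\<dots> \<le> 4/9 * a N"
    by (intro mult_right_mono sum_rep_bound_le) (simp add: a_def)
  finally show ?thesis unfolding a_def by linarith
qed

lemma rep_free_words_decay: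
  "m \<le> N \<Longrightarrow> real (card (rep_free_words m)) \<le> (2/3) ^ (N - m) * real (card (rep_free_words N))"
proof (induction N arbitrary: m)
  case (Suc N)
  have step: "3/2 * real (card (rep_free_words N)) \<le> real (card (rep_free_words (Suc N)))"
    using Suc.IH by (intro rep_free_words_growth_step) blast
  show ?case
  proof (cases "m = Suc N")
    case False
    then have "m \<le> N" using Suc.prems by simp
    then have "real (card (rep_free_words m)) \<le> (2/3) ^ (N - m) * real (card (rep_free_words N))"
      by (rule Suc.IH)
    also have "\<dots> \<le> (2/3) ^ (N - m) * ((2/3) * real (card (rep_free_words (Suc N))))"
      using step by (intro mult_left_mono) auto
    also have "\<dots> = (2/3) ^ (Suc N - m) * real (card (rep_free_words (Suc N)))"
      using \<open>m \<le> N\<close> by (simp add: Suc_diff_le)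
    finally show ?thesis .
  qed simp
qed simp

lemma rep_free_words_nonempty: "rep_free_words N \<noteq> {}"
proof -
  have "1 \<le> real (card (rep_free_words N))"
  proof (induction N)
    case 0
    have "rep_free_words 0 = {[]}" unfolding rep_free_words_def using rep_free_Nil by auto
    then show ?case by simp
  next
    case (Suc N)
    have "3/2 * real (card (rep_free_words N)) \<le> real (card (rep_free_words (Suc N)))"
      by (rule rep_free_words_growth_step) (use rep_free_words_decay in blast)
    with Suc.IH show ?case by linarith
  qed
  then show ?thesis by auto
qed

lemma exists_bounded_reps_binary_word: "\<exists>x :: nat \<Rightarrow> bool. bounded_reps rep_bound x"
proof -
  have "\<exists>u :: bool list. length u = N \<and> rep_free u" for N
    using rep_free_words_nonempty[of N] unfolding rep_free_words_def ex_in_conv[symmetric] mem_Collect_eq by blast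
  from binary_koenig[of rep_free, OF rep_free_take this]
  obtain x :: "nat \<Rightarrow> bool" where x: "\<And>k. rep_free (map x [0..<k])" by blast
  have "l < rep_bound p" if "0 < p" "\<forall>t<l. x (i + t) = x (i + p + t)" for p i l
  proof (rule ccontr)
    assume "\<not> l < rep_bound p"
    with that have "\<forall>t<rep_bound p. map x [0..<i + p + rep_bound p] ! (i + t) =
        map x [0..<i + p + rep_bound p] ! (i + p + t)" by auto
    with x[of "i + p + rep_bound p"] \<open>0 < p\<close> show False unfolding rep_free_def by auto
  qed
  then show ?thesis unfolding bounded_reps_def by blast
qed

section \<open>The rounds word\<close>

definition tri :: "nat \<Rightarrow> nat" where
  "tri k = (\<Sum>r<k. Suc r)"

definition round_start :: "nat \<Rightarrow> nat \<Rightarrow> nat" where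
  "round_start n k = n * tri k"

definition round_of :: "nat \<Rightarrow> nat \<Rightarrow> nat" where
  "round_of n q = (LEAST k. q < round_start n (Suc k))"

definition block_of :: "nat \<Rightarrow> nat \<Rightarrow> nat" where
  "block_of n q = (q - round_start n (round_of n q)) div Suc (round_of n q)"

definition offset_of :: "nat \<Rightarrow> nat \<Rightarrow> nat" where
  "offset_of n q = (q - round_start n (round_of n q)) mod Suc (round_of n q)"

definition source_of :: "nat \<Rightarrow> nat \<Rightarrow> nat" where
  "source_of n q = tri (round_of n q) + offset_of n q"

definition rounds_word :: "nat \<Rightarrow> (nat \<Rightarrow> bool) \<Rightarrow> nat \<Rightarrow> nat" where
  "rounds_word n x q = 2 * block_of n q + of_bool (x (source_of n q))"

definition inner_block_start :: "nat \<Rightarrow> nat \<Rightarrow> bool" where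
  "inner_block_start n q \<longleftrightarrow> offset_of n q = 0 \<and> 0 < block_of n q"

lemma tri_Suc: "tri (Suc k) = tri k + Suc k"
  by (simp add: tri_def)

lemma tri_mono: "k \<le> k' \<Longrightarrow> tri k \<le> tri k'"
  unfolding tri_def by (rule sum_mono2) auto

lemma le_tri: "k \<le> tri k"
  by (induction k) (auto simp: tri_Suc)

lemma round_start_Suc: "round_start n (Suc k) = round_start n k + n * Suc k"
  by (simp add: round_start_def tri_Suc algebra_simps)

lemma round_start_mono: "k \<le> k' \<Longrightarrow> round_start n k \<le> round_start n k'"
  by (simp add: round_start_def tri_mono)

lemma layout_decode:
  assumes "i < n" "m < Suc k"
  shows "round_of n (round_start n k + i * Suc k + m) = k"
    and "block_of n (round_start n k + i * Suc k + m) = i"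
    and "offset_of n (round_start n k + i * Suc k + m) = m"
proof -
  define q where "q = round_start n k + i * Suc k + m"
  have "Suc i * Suc k \<le> n * Suc k" using assms by (intro mult_le_mono1) simp
  then have "q < round_start n (Suc k)" unfolding q_def round_start_Suc using assms by simp
  moreover have "\<not> q < round_start n (Suc k')" if "k' < k" for k'
    using round_start_mono[of "Suc k'" k n] that unfolding q_def by simp
  ultimately have round: "round_of n q = k"
    unfolding round_of_def by (intro Least_equality) (auto simp: not_less[symmetric])
  have "q - round_start n k = i * Suc k + m" unfolding q_def by simp
  with round assms(2) show "round_of n q = k" "block_of n q = i" "offset_of n q = m"
    unfolding block_of_def offset_of_def by (simp_all del: mult_Suc_right)
qed

lemma layout_encode:
  assumes "0 < n"
  shows "q = round_start n (round_of n q) + block_of n q * Suc (round_of n q) + offset_of n q"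
    and "block_of n q < n" and "offset_of n q < Suc (round_of n q)"
proof -
  define k where "k = round_of n q"
  have "Suc q \<le> tri (Suc q)" by (rule le_tri)
  also have "\<dots> \<le> n * tri (Suc q)" using assms by simp
  finally have "q < round_start n (Suc q)" unfolding round_start_def by simp
  then have upper: "q < round_start n (Suc k)" unfolding k_def round_of_def by (rule LeastI)
  have lower: "round_start n k \<le> q"
  proof (cases k)
    case (Suc k0)
    then have "\<not> q < round_start n (Suc k0)" unfolding k_def round_of_def by (intro not_less_Least) simp
    then show ?thesis using Suc by simp
  qed (simp add: round_start_def tri_def)
  have "q - round_start n k < n * Suc k" using upper lower unfolding round_start_Suc by simp
  then show "block_of n q < n"
    unfolding block_of_def k_def[symmetric] by (simp add: less_mult_imp_div_less)
  show "offset_of n q < Suc (round_of n q)" unfolding offset_of_def by simp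
  show "q = round_start n (round_of n q) + block_of n q * Suc (round_of n q) + offset_of n q"
    using lower div_mult_mod_eq[of "q - round_start n k" "Suc k"]
    unfolding block_of_def offset_of_def k_def[symmetric] by linarith
qed

lemma rounds_word_layout:
  "i < n \<Longrightarrow> m < Suc k \<Longrightarrow> rounds_word n x (round_start n k + i * Suc k + m) = 2 * i + of_bool (x (tri k + m))"
  using layout_decode[of i n m k] by (simp add: rounds_word_def source_of_def)

lemma layout_Suc_cases:
  assumes "0 < n"
  obtains (same_block) "block_of n (Suc q) = block_of n q" "offset_of n (Suc q) = Suc (offset_of n q)"
      "source_of n (Suc q) = Suc (source_of n q)"
    | (next_block) "block_of n (Suc q) = Suc (block_of n q)" "offset_of n (Suc q) = 0"
    | (next_round) "block_of n (Suc q) = 0" "offset_of n (Suc q) = 0"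
      "source_of n (Suc q) = Suc (source_of n q)"
proof -
  define k i m where "k = round_of n q" and "i = block_of n q" and "m = offset_of n q"
  have q: "q = round_start n k + i * Suc k + m" and "i < n" "m < Suc k"
    using layout_encode[OF assms, of q] unfolding k_def i_def m_def by auto
  consider "m < k" | "m = k" "Suc i < n" | "m = k" "Suc i = n" using \<open>i < n\<close> \<open>m < Suc k\<close> by linarith
  then show thesis
  proof cases
    case 1
    then have sq: "Suc q = round_start n k + i * Suc k + Suc m" and "Suc m < Suc k" using q by simp_all
    have "round_of n (Suc q) = k" "block_of n (Suc q) = i" "offset_of n (Suc q) = Suc m"
      unfolding sq by (rule layout_decode[OF \<open>i < n\<close> \<open>Suc m < Suc k\<close>])+
    then show thesis by (intro same_block) (simp_all add: source_of_def k_def i_def m_def)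
  next
    case 2
    then have sq: "Suc q = round_start n k + Suc i * Suc k + 0" using q by simp
    have "block_of n (Suc q) = Suc i" "offset_of n (Suc q) = 0"
      unfolding sq by (rule layout_decode[OF \<open>Suc i < n\<close>], simp)+
    then show thesis by (intro next_block) (simp_all add: i_def)
  next
    case 3
    have sq: "Suc q = round_start n (Suc k) + 0 * Suc (Suc k) + 0"
      using q 3(1) unfolding 3(2)[symmetric] by (simp add: round_start_Suc)
    have "round_of n (Suc q) = Suc k" "block_of n (Suc q) = 0" "offset_of n (Suc q) = 0"
      unfolding sq by (rule layout_decode[OF assms], simp)+
    with 3 show thesis by (intro next_round) (simp_all add: source_of_def tri_Suc k_def m_def)
  qed
qed

lemma source_of_Suc:
  "0 < n \<Longrightarrow> \<not> inner_block_start n (Suc q) \<Longrightarrow> source_of n (Suc q) = Suc (source_of n q)"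
  by (cases rule: layout_Suc_cases[of n q]) (auto simp: inner_block_start_def)

lemma inner_block_start_Suc_iff:
  "0 < n \<Longrightarrow> inner_block_start n (Suc q) \<longleftrightarrow> block_of n (Suc q) \<noteq> block_of n q \<and> 0 < block_of n (Suc q)"
  by (cases rule: layout_Suc_cases[of n q]) (auto simp: inner_block_start_def)

lemma rounds_word_eq_iff:
  "rounds_word n x q = rounds_word n x q' \<longleftrightarrow>
     block_of n q = block_of n q' \<and> x (source_of n q) = x (source_of n q')"
  unfolding rounds_word_def by (cases "x (source_of n q)"; cases "x (source_of n q')"; simp; presburger)

lemma inner_block_start_extent:
  assumes "0 < n" "inner_block_start n Q"
  shows "\<And>s. 0 < s \<Longrightarrow> s \<le> round_of n Q \<Longrightarrow> block_of n (Q + s) = block_of n Q"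
    and "block_of n (Q + Suc (round_of n Q)) \<noteq> block_of n Q"
proof -
  define k i where "k = round_of n Q" and "i = block_of n Q"
  have Q: "Q = round_start n k + i * Suc k" and "i < n" "0 < i"
    using layout_encode[OF assms(1), of Q] assms(2) unfolding k_def i_def inner_block_start_def by auto
  show "block_of n (Q + s) = block_of n Q" if "0 < s" "s \<le> round_of n Q" for s
  proof -
    have Qs: "Q + s = round_start n k + i * Suc k + s" using Q by simp
    from that have "s < Suc k" unfolding k_def by simp
    then show ?thesis unfolding Qs i_def[symmetric] by (rule layout_decode(2)[OF \<open>i < n\<close>])
  qed
  show "block_of n (Q + Suc (round_of n Q)) \<noteq> block_of n Q"
  proof (cases "Suc i < n")
    case True
    have eq: "Q + Suc (round_of n Q) = round_start n k + Suc i * Suc k + 0"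
      unfolding k_def[symmetric] using Q by simp
    show ?thesis unfolding eq i_def[symmetric] using layout_decode(2)[OF True, of 0 k] by simp
  next
    case False
    with \<open>i < n\<close> have "n = Suc i" by simp
    have eq: "Q + Suc (round_of n Q) = round_start n (Suc k) + 0 * Suc (Suc k) + 0"
      unfolding k_def[symmetric] using Q by (simp add: round_start_Suc \<open>n = Suc i\<close>)
    show ?thesis unfolding eq i_def[symmetric] using layout_decode(2)[OF assms(1), of 0 "Suc k"] \<open>0 < i\<close>
      by simp
  qed
qed

lemma round_of_mono:
  assumes "0 < n" "q \<le> q'"
  shows "round_of n q \<le> round_of n q'"
proof -
  have "Suc (block_of n q') * Suc (round_of n q') \<le> n * Suc (round_of n q')"
    using layout_encode(2)[OF assms(1), of q'] by (intro mult_le_mono1) simp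
  then have "q' < round_start n (Suc (round_of n q'))"
    using layout_encode[OF assms(1), of q'] by (simp add: round_start_Suc)
  with assms(2) show ?thesis unfolding round_of_def[of n q] by (intro Least_le) simp
qed

lemma source_of_less_if_same_block:
  assumes "0 < n" "q < q'" "block_of n q = block_of n q'"
  shows "source_of n q < source_of n q'" and "source_of n q' - source_of n q \<le> q' - q"
proof -
  define k i m k' m' where "k = round_of n q" and "i = block_of n q" and "m = offset_of n q"
    and "k' = round_of n q'" and "m' = offset_of n q'"
  have q: "q = round_start n k + i * Suc k + m" "m < Suc k"
    and q': "q' = round_start n k' + i * Suc k' + m'" "m' < Suc k'"
    using layout_encode[OF assms(1), of q] layout_encode[OF assms(1), of q'] assms(3)
    unfolding k_def i_def m_def k'_def m'_def by auto
  have "k \<le> k'" unfolding k_def k'_def using round_of_mono[OF assms(1)] assms(2) by simp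
  have src: "source_of n q = tri k + m" "source_of n q' = tri k' + m'"
    unfolding source_of_def k_def m_def k'_def m'_def by simp_all
  have "source_of n q < source_of n q' \<and> source_of n q' - source_of n q \<le> q' - q"
  proof (cases "k = k'")
    case False
    with \<open>k \<le> k'\<close> have "tri k + Suc k \<le> tri k'" using tri_mono[of "Suc k" k'] by (simp add: tri_Suc)
    moreover have "(n - 1) * tri k \<le> (n - 1) * tri k'" using tri_mono[OF \<open>k \<le> k'\<close>] by simp
    moreover have "i * Suc k \<le> i * Suc k'" using \<open>k \<le> k'\<close> by simp
    moreover have "n * tri k = (n - 1) * tri k + tri k" "n * tri k' = (n - 1) * tri k' + tri k'"
      using assms(1) by (cases n; simp)+
    ultimately show ?thesis using q q' src unfolding round_start_def by linarith
  qed (use q q' src assms(2) in simp)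
  then show "source_of n q < source_of n q'" "source_of n q' - source_of n q \<le> q' - q" by simp_all
qed

lemma source_of_add:
  assumes "0 < n" "\<And>r. 0 < r \<Longrightarrow> r \<le> s \<Longrightarrow> \<not> inner_block_start n (q + r)"
  shows "source_of n (q + s) = source_of n q + s"
  using assms(2)
proof (induction s)
  case (Suc s)
  then have "source_of n (q + s) = source_of n q + s" by simp
  moreover have "\<not> inner_block_start n (Suc (q + s))" using Suc.prems[of "Suc s"] by simp
  ultimately show ?case using source_of_Suc[OF assms(1)] by simp
qed simp

lemma inner_block_starts_diverge:
  assumes "0 < n" "inner_block_start n Q" "inner_block_start n Q'" "block_of n Q = block_of n Q'"
    and "round_of n Q < round_of n Q'"
  shows "block_of n (Q + Suc (round_of n Q)) \<noteq> block_of n (Q' + Suc (round_of n Q))"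
  using inner_block_start_extent(2)[OF assms(1,2)] inner_block_start_extent(1)[OF assms(1,3)] assms(4,5)
  by (metis Suc_leI zero_less_Suc)

lemma inner_block_starts_same_round:
  assumes "0 < n" "inner_block_start n Q" "inner_block_start n Q'" "block_of n Q = block_of n Q'"
    and "round_of n Q = round_of n Q'"
  shows "Q = Q'"
  using layout_encode(1)[OF assms(1), of Q] layout_encode(1)[OF assms(1), of Q'] assms(2-5)
  by (simp add: inner_block_start_def)

locale rounds_word_rep =
  fixes n :: nat and x :: "nat \<Rightarrow> bool" and j p l :: nat
  assumes n_pos: "0 < n" and x_reps: "bounded_reps rep_bound x" and p_pos: "0 < p"
    and rep: "\<And>t. t < l \<Longrightarrow> rounds_word n x (j + t) = rounds_word n x (j + p + t)"
begin

lemma block_eq: "t < l \<Longrightarrow> block_of n (j + t) = block_of n (j + p + t)"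
  using rep rounds_word_eq_iff by blast

lemma inner_block_start_iff:
  assumes "0 < t" "t < l"
  shows "inner_block_start n (j + t) \<longleftrightarrow> inner_block_start n (j + p + t)"
proof -
  obtain t0 where t: "t = Suc t0" using assms(1) by (cases t) auto
  with assms block_eq[of t0] block_eq[of t] show ?thesis
    using inner_block_start_Suc_iff[OF n_pos, of "j + t0"] inner_block_start_Suc_iff[OF n_pos, of "j + p + t0"]
    by simp
qed

lemma short_without_inner_starts:
  assumes "a < b" "b \<le> l" and no_start: "\<And>t. a < t \<Longrightarrow> t < b \<Longrightarrow> \<not> inner_block_start n (j + t)"
  shows "b - a < rep_bound p"
proof -
  define src src' where "src = source_of n (j + a)" and "src' = source_of n (j + p + a)"
  have shift: "source_of n (j + a + s) = src + s" "source_of n (j + p + a + s) = src' + s" if "a + s < b" for s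
  proof -
    have "\<not> inner_block_start n (j + a + r)" "\<not> inner_block_start n (j + p + a + r)"
      if "0 < r" "r \<le> s" for r
      using no_start[of "a + r"] inner_block_start_iff[of "a + r"] that \<open>a + s < b\<close> assms(2)
      by (simp_all add: add.assoc)
    then show "source_of n (j + a + s) = src + s" "source_of n (j + p + a + s) = src' + s"
      unfolding src_def src'_def by (simp_all add: source_of_add[OF n_pos])
  qed
  have "block_of n (j + a) = block_of n (j + p + a)" using block_eq assms by simp
  then have "src < src'" "src' - src \<le> p"
    using source_of_less_if_same_block[OF n_pos, of "j + a" "j + p + a"] p_pos
    unfolding src_def src'_def by simp_all
  define d where "d = src' - src"
  have "x (src + t) = x (src + d + t)" if "t < b - a" for t
  proof -
    have "x (source_of n (j + (a + t))) = x (source_of n (j + p + (a + t)))"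
      using rep[of "a + t"] that assms(2) rounds_word_eq_iff by simp
    with shift[of t] that \<open>src < src'\<close> show ?thesis unfolding d_def by (simp add: add.assoc)
  qed
  moreover have "0 < d" using \<open>src < src'\<close> unfolding d_def by simp
  ultimately have "b - a < rep_bound d" using x_reps unfolding bounded_reps_def by blast
  also have "\<dots> \<le> rep_bound p" using rep_bound_mono \<open>src' - src \<le> p\<close> unfolding d_def by (simp add: monoD)
  finally show ?thesis .
qed

lemma no_inner_start_after_inner_start:
  assumes "0 < t1" "t1 < t" "t < l" "inner_block_start n (j + t1)"
  shows "\<not> inner_block_start n (j + t)"
proof -
  define Q Q' where "Q = j + t1" and "Q' = j + p + t1"
  have starts: "inner_block_start n Q" "inner_block_start n Q'"
    using assms inner_block_start_iff[of t1] unfolding Q_def Q'_def by auto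
  have same_block: "block_of n Q = block_of n Q'" using block_eq assms unfolding Q_def Q'_def by simp
  define k k' where "k = round_of n Q" and "k' = round_of n Q'"
  have "k \<noteq> k'" using inner_block_starts_same_round[OF n_pos starts same_block] p_pos
    unfolding k_def k'_def Q_def Q'_def by auto
  have "l \<le> t1 + Suc k"
  proof (rule ccontr)
    assume long: "\<not> l \<le> t1 + Suc k"
    consider "k < k'" | "k' < k" using \<open>k \<noteq> k'\<close> by linarith
    then show False
    proof cases
      case 1
      have "block_of n (Q + Suc k) = block_of n (Q' + Suc k)"
        using block_eq[of "t1 + Suc k"] long unfolding Q_def Q'_def by (simp add: add.assoc)
      with inner_block_starts_diverge[OF n_pos starts same_block] 1 show False
        unfolding k_def k'_def by simp
    next
      case 2
      have "block_of n (Q' + Suc k') = block_of n (Q + Suc k')"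
        using block_eq[of "t1 + Suc k'"] long 2 unfolding Q_def Q'_def by (simp add: add.assoc)
      with inner_block_starts_diverge[OF n_pos starts(2,1) same_block[symmetric]] 2 show False
        unfolding k_def k'_def by simp
    qed
  qed
  define s where "s = t - t1"
  have "0 < s" "s \<le> k" "j + t = Suc (Q + (s - 1))"
    using assms \<open>l \<le> t1 + Suc k\<close> unfolding s_def Q_def by auto
  have "block_of n (Q + s) = block_of n Q" using inner_block_start_extent(1)[OF n_pos starts(1)]
    \<open>0 < s\<close> \<open>s \<le> k\<close> unfolding k_def by simp
  moreover have "block_of n (Q + (s - 1)) = block_of n Q"
  proof (cases "s = 1")
    case False
    then show ?thesis using \<open>0 < s\<close> \<open>s \<le> k\<close> unfolding k_def
      by (intro inner_block_start_extent(1)[OF n_pos starts(1)]) auto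
  qed simp
  ultimately show ?thesis
    using inner_block_start_Suc_iff[OF n_pos, of "Q + (s - 1)"] \<open>0 < s\<close> \<open>j + t = Suc (Q + (s - 1))\<close>
    by simp
qed

lemma length_bound: "l < 2 * rep_bound p"
proof (cases "\<exists>t. 0 < t \<and> t < l \<and> inner_block_start n (j + t)")
  case no_start: False
  show ?thesis
  proof (cases "l = 0")
    case True
    then show ?thesis using rep_bound_pos[of p] by simp
  next
    case False
    then have "l - 0 < rep_bound p" using no_start by (intro short_without_inner_starts) auto
    then show ?thesis by simp
  qed
next
  case True
  then obtain t1 where t1: "0 < t1" "t1 < l" "inner_block_start n (j + t1)"
    and first: "\<And>t. t < t1 \<Longrightarrow> \<not> (0 < t \<and> t < l \<and> inner_block_start n (j + t))"
    unfolding exists_least_iff[of "\<lambda>t. 0 < t \<and> t < l \<and> inner_block_start n (j + t)"] by blast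
  have "t1 - 0 < rep_bound p"
    using first t1 by (intro short_without_inner_starts) auto
  moreover have "l - t1 < rep_bound p"
    using no_inner_start_after_inner_start t1 by (intro short_without_inner_starts) auto
  ultimately show ?thesis by linarith
qed

end

lemma bounded_reps_rounds_word:
  assumes "0 < n" "bounded_reps rep_bound x"
  shows "bounded_reps (\<lambda>p. 2 * rep_bound p) (rounds_word n x)"
  unfolding bounded_reps_def
proof (intro allI impI)
  fix p j l assume "0 < p" "\<forall>t<l. rounds_word n x (j + t) = rounds_word n x (j + p + t)"
  then interpret rounds_word_rep n x j p l using assms by unfold_locales auto
  show "l < 2 * rep_bound p" by (rule length_bound)
qed

lemma rounds_word_less: "0 < n \<Longrightarrow> rounds_word n x q < 2 * n"
  using layout_encode(2)[of n q] by (simp add: rounds_word_def)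

lemma rounds_word_round:
  assumes "0 < n"
  shows "map (\<lambda>t. rounds_word n x (round_start n k + t)) [0..<n * Suc k] =
    concat (map (\<lambda>i. map (\<lambda>m. 2 * i + of_bool (x (tri k + m))) [0..<Suc k]) [0..<n])"
proof (rule nth_equalityI)
  show "length (map (\<lambda>t. rounds_word n x (round_start n k + t)) [0..<n * Suc k]) =
      length (concat (map (\<lambda>i. map (\<lambda>m. 2 * i + of_bool (x (tri k + m))) [0..<Suc k]) [0..<n]))"
    by (simp add: length_concat comp_def sum_list_triv)
next
  fix t assume "t < length (map (\<lambda>t. rounds_word n x (round_start n k + t)) [0..<n * Suc k])"
  then have t: "t < n * Suc k" by simp
  define i m where "i = t div Suc k" and "m = t mod Suc k"
  have "i < n" unfolding i_def by (rule less_mult_imp_div_less[OF t])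
  have "m < Suc k" unfolding m_def by simp
  have "t = i * Suc k + m" unfolding i_def m_def by (rule div_mult_mod_eq[symmetric])
  have "rounds_word n x (round_start n k + t) = 2 * i + of_bool (x (tri k + m))"
    unfolding \<open>t = i * Suc k + m\<close> add.assoc[symmetric]
    by (rule rounds_word_layout[OF \<open>i < n\<close> \<open>m < Suc k\<close>])
  also have "\<dots> = concat (map (\<lambda>i. map (\<lambda>m. 2 * i + of_bool (x (tri k + m))) [0..<Suc k]) [0..<n]) ! t"
    using t \<open>i < n\<close> \<open>m < Suc k\<close> unfolding i_def m_def
    by (subst nth_concat_uniform[where L = "Suc k"]) (auto simp: mult.commute simp del: upt_Suc)
  finally show "map (\<lambda>t. rounds_word n x (round_start n k + t)) [0..<n * Suc k] ! t =
      concat (map (\<lambda>i. map (\<lambda>m. 2 * i + of_bool (x (tri k + m))) [0..<Suc k]) [0..<n]) ! t"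
    using t by simp
qed

lemma ACE_rounds_word:
  assumes "0 < n" "bounded_reps rep_bound x"
  shows "ACE (rounds_word n x) = 1"
proof (rule ACE_eq_one)
  show "bounded_reps (\<lambda>p. 2 * rep_bound p) (rounds_word n x)"
    by (rule bounded_reps_rounds_word[OF assms])
  show "mono (\<lambda>p. 2 * rep_bound p)" using rep_bound_mono by (simp add: mono_def)
  show "(\<lambda>p. real (2 * rep_bound p) / real p) \<longlonglongrightarrow> 0"
    using tendsto_mult_right_zero[OF rep_bound_sublinear, of 2] by simp
qed

section \<open>A uniform coding morphism\<close>

lemma length_morph_uniform:
  "\<forall>a\<in>set u. length (h a) = L \<Longrightarrow> length (morph h u) = L * length u"
  by (induction u) (auto simp: morph_def)

lemma morph_concat: "morph h (concat us) = concat (map (morph h) us)"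
  by (induction us) (simp_all add: morph_def)

lemma inj_on_morph_uniform:
  assumes len: "\<forall>a\<in>A. length (h a) = L" and "0 < L" and inj: "inj_on h A"
  shows "inj_on (morph h) (lists A)"
proof (rule inj_onI)
  fix u v assume "u \<in> lists A" "v \<in> lists A" "morph h u = morph h v"
  then show "u = v"
  proof (induction u arbitrary: v)
    case Nil
    from Nil.prems have "length (morph h v) = 0" by (simp add: morph_def)
    moreover have "length (morph h v) = L * length v"
      using Nil.prems len by (intro length_morph_uniform) (auto simp: in_lists_conv_set)
    ultimately show ?case using \<open>0 < L\<close> by simp
  next
    case (Cons a u)
    then have "v \<noteq> []" using len \<open>0 < L\<close> by (auto simp: morph_def)
    then obtain b v' where v: "v = b # v'" by (cases v) auto
    have "a \<in> A" "b \<in> A" "v' \<in> lists A" using Cons.hyps Cons.prems v by auto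
    have "h a @ morph h u = h b @ morph h v'" using Cons.prems v by (simp add: morph_def)
    moreover have "length (h a) = length (h b)" using len \<open>a \<in> A\<close> \<open>b \<in> A\<close> by simp
    ultimately have "h a = h b" "morph h u = morph h v'" by auto
    then have "a = b" "u = v'"
      using inj_onD[OF inj _ \<open>a \<in> A\<close> \<open>b \<in> A\<close>] Cons.IH[OF \<open>v' \<in> lists A\<close>] by auto
    with v show ?case by simp
  qed
qed

lemma morph_inf_uniform:
  assumes "\<forall>i. w i \<in> A" "\<forall>a\<in>A. length (h a) = L" "0 < L"
  shows "morph_inf h w q = h (w (q div L)) ! (q mod L)"
proof -
  have "Suc q \<le> L * Suc q" using mult_le_mono1[of 1 L "Suc q"] \<open>0 < L\<close> by simp
  then have "q < L * length (map w [0..<Suc q])" by simp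
  moreover have "q div L < Suc q" by (meson div_le_dividend le_imp_less_Suc)
  ultimately show ?thesis using assms unfolding morph_inf_def morph_def
    by (subst nth_concat_uniform[where L = L]) (auto simp del: upt_Suc)
qed

lemma morph_inf_window:
  assumes "\<forall>i. w i \<in> A" "\<forall>a\<in>A. length (h a) = L" "0 < L"
  shows "map (\<lambda>t. morph_inf h w (L * a + t)) [0..<L * b] = morph h (map (\<lambda>t. w (a + t)) [0..<b])"
proof (rule nth_equalityI)
  show "length (map (\<lambda>t. morph_inf h w (L * a + t)) [0..<L * b]) = length (morph h (map (\<lambda>t. w (a + t)) [0..<b]))"
    using assms by (subst length_morph_uniform[where L = L]) auto
next
  fix t assume "t < length (map (\<lambda>t. morph_inf h w (L * a + t)) [0..<L * b])"
  then have "t < L * b" by simp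
  then have "t div L < b" by (simp add: less_mult_imp_div_less mult.commute)
  have "map (\<lambda>t. morph_inf h w (L * a + t)) [0..<L * b] ! t = h (w (a + t div L)) ! (t mod L)"
    using \<open>t < L * b\<close> \<open>0 < L\<close> by (simp add: morph_inf_uniform[OF assms])
  also have "\<dots> = h (map (\<lambda>t. w (a + t)) [0..<b] ! (t div L)) ! (t mod L)"
    using \<open>t div L < b\<close> by simp
  also have "\<dots> = morph h (map (\<lambda>t. w (a + t)) [0..<b]) ! t"
    unfolding morph_def using assms(1,2) \<open>t < L * b\<close> by (intro nth_concat_uniform[symmetric]) auto
  finally show "map (\<lambda>t. morph_inf h w (L * a + t)) [0..<L * b] ! t =
      morph h (map (\<lambda>t. w (a + t)) [0..<b]) ! t" .
qed

lemma infix_in_Fact: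
  assumes "map (\<lambda>t. w (a + t)) [0..<m] = A @ B @ C"
  shows "B \<in> Fact (length B) w"
proof -
  have "B = map (\<lambda>t. w (a + length A + t)) [0..<length B]"
  proof (rule nth_equalityI)
    fix t assume "t < length B"
    with arg_cong[OF assms, of "\<lambda>xs. xs ! (length A + t)"] arg_cong[OF assms, of length]
    show "B ! t = map (\<lambda>t. w (a + length A + t)) [0..<length B] ! t"
      by (simp add: nth_append add.assoc)
  qed simp
  then show ?thesis unfolding Fact_def by blast
qed

definition letter_code :: "nat \<Rightarrow> nat \<Rightarrow> nat \<Rightarrow> nat \<Rightarrow> nat list" where
  "letter_code n g e a = replicate (n - 1 - a div 2) g @ [e, if even a then e else g] @ replicate (a div 2) g"

lemma length_letter_code: "a div 2 < n \<Longrightarrow> length (letter_code n g e a) = n + 1"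
  by (simp add: letter_code_def)

lemma letter_code_block_letter:
  "letter_code n g e (2 * i + of_bool b) = replicate (n - 1 - i) g @ [e, if b then g else e] @ replicate i g"
  by (cases b) (simp_all add: letter_code_def)

lemma inj_on_letter_code:
  assumes "g \<noteq> e"
  shows "inj_on (letter_code n g e) {0..<2 * n}"
proof (rule inj_onI)
  fix a b assume ab: "a \<in> {0..<2 * n}" "b \<in> {0..<2 * n}" and eq: "letter_code n g e a = letter_code n g e b"
  have "takeWhile (\<lambda>c. c = g) (letter_code n g e a) = replicate (n - 1 - a div 2) g" for a
    using assms by (simp add: letter_code_def takeWhile_append)
  from arg_cong[OF eq, of "\<lambda>u. length (takeWhile (\<lambda>c. c = g) u)"] this[of a] this[of b] ab
  have "a div 2 = b div 2" by simp
  with eq have "even a \<longleftrightarrow> even b" using assms by (simp add: letter_code_def split: if_splits)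
  with \<open>a div 2 = b div 2\<close> show "a = b" by (metis div_mult_mod_eq odd_iff_mod_2_eq_one even_iff_mod_2_eq_zero)
qed

lemma concat_map_conjugate:
  "concat (map (\<lambda>y. replicate a c @ f y @ replicate b c) ys) @ replicate a c =
     replicate a c @ concat (map (\<lambda>y. f y @ replicate (a + b) c) ys)"
  by (induction ys) (simp_all add: add.commute flip: replicate_add)

lemma concat_replicate_snoc: "concat (replicate j u) @ u = concat (replicate (Suc j) u)"
  by (induction j) simp_all

lemma morph_letter_code_round:
  fixes y :: "nat \<Rightarrow> bool" and n K g e :: nat
  defines "V \<equiv> concat (map (\<lambda>m. [e, if y m then g else e] @ replicate (n - 1) g) [0..<K])"
  assumes "0 < n" "0 < K"
  shows "morph (letter_code n g e) (concat (map (\<lambda>i. map (\<lambda>m. 2 * i + of_bool (y m)) [0..<K]) [0..<n]))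
    = replicate (n - 1) g @ concat (replicate n (butlast V)) @ [last V]"
proof -
  define U where "U = butlast V"
  define C where "C i = morph (letter_code n g e) (map (\<lambda>m. 2 * i + of_bool (y m)) [0..<K])" for i
  have C_conj: "C i @ replicate (n - 1 - i) g = replicate (n - 1 - i) g @ V" if "i < n" for i
  proof -
    have "n - 1 - i + i = n - 1" using that by simp
    then show ?thesis
      unfolding C_def morph_def V_def using concat_map_conjugate[of "n - 1 - i" g "\<lambda>m. [e, if y m then g else e]" i]
      by (simp add: letter_code_block_letter comp_def)
  qed
  have "V \<noteq> []" unfolding V_def using \<open>0 < K\<close> by (cases K) simp_all
  then have V: "V = U @ [last V]" unfolding U_def by simp
  have last_V: "last V = g" if "1 < n"
  proof -
    obtain K' where "K = Suc K'" using \<open>0 < K\<close> by (cases K) auto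
    with that show ?thesis unfolding V_def by (cases "n - 1") simp_all
  qed
  have step: "concat (map C [0..<Suc j]) @ replicate (n - 1 - j) g = replicate (n - 1) g @ concat (replicate j U) @ V"
    if "j < n" for j
    using that
  proof (induction j)
    case 0
    show ?case using C_conj[OF \<open>0 < n\<close>] by simp
  next
    case (Suc j)
    have "n - 1 - j = Suc (n - 1 - Suc j)" using Suc.prems by simp
    then have "(concat (map C [0..<Suc j]) @ replicate (n - 1 - Suc j) g) @ [g] =
        (replicate (n - 1) g @ concat (replicate j U) @ U) @ [g]"
      using Suc V last_V by (simp flip: replicate_append_same)
    then have "concat (map C [0..<Suc j]) @ replicate (n - 1 - Suc j) g =
        replicate (n - 1) g @ concat (replicate (Suc j) U)"
      unfolding concat_replicate_snoc[symmetric] by simp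
    then show ?case using C_conj[OF Suc.prems] by simp
  qed
  have "morph (letter_code n g e) (concat (map (\<lambda>i. map (\<lambda>m. 2 * i + of_bool (y m)) [0..<K]) [0..<n])) =
      concat (map C [0..<n])"
    unfolding morph_concat C_def by (simp add: comp_def)
  also have "\<dots> = replicate (n - 1) g @ concat (replicate (n - 1) U) @ U @ [last V]"
    using step[of "n - 1"] \<open>0 < n\<close> V by simp
  also have "\<dots> = replicate (n - 1) g @ concat (replicate n U) @ [last V]"
    using \<open>0 < n\<close> concat_replicate_snoc[of "n - 1" U] by simp
  finally show ?thesis unfolding U_def .
qed

lemma le_ACE_morph_letter_code_rounds_word:
  assumes "0 < n"
  shows "ereal (real n) \<le> ACE (morph_inf (letter_code n g e) (rounds_word n x))"
proof (rule le_ACE)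
  fix N
  define V where "V = concat (map (\<lambda>m. [e, if x (tri N + m) then g else e] @ replicate (n - 1) g) [0..<Suc N])"
  define U where "U = butlast V"
  have letters: "\<forall>q. rounds_word n x q \<in> {0..<2 * n}" using rounds_word_less[OF assms] by simp
  have len: "\<forall>a\<in>{0..<2 * n}. length (letter_code n g e a) = n + 1" by (simp add: length_letter_code)
  have "map (\<lambda>t. morph_inf (letter_code n g e) (rounds_word n x) ((n + 1) * round_start n N + t))
      [0..<(n + 1) * (n * Suc N)] =
      morph (letter_code n g e) (map (\<lambda>t. rounds_word n x (round_start n N + t)) [0..<n * Suc N])"
    by (rule morph_inf_window[OF letters len]) simp
  also have "\<dots> = replicate (n - 1) g @ concat (replicate n U) @ [last V]"
    unfolding rounds_word_round[OF assms] U_def V_def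
    by (rule morph_letter_code_round[OF assms, where y = "\<lambda>m. x (tri N + m)"]) simp
  finally have "concat (replicate n U) \<in> Fact (length (concat (replicate n U)))
      (morph_inf (letter_code n g e) (rounds_word n x))"
    by (rule infix_in_Fact)
  then have Fact: "concat (replicate n U) \<in> Fact (n * length U) (morph_inf (letter_code n g e) (rounds_word n x))"
    by (simp add: length_concat sum_list_replicate)
  have "length V = (n + 1) * Suc N" unfolding V_def using assms
    by (simp add: length_concat comp_def sum_list_triv)
  then have "length U = n * Suc N + N" unfolding U_def by simp
  then have "U \<noteq> []" "N \<le> length U" using assms by auto
  have "length U \<le> n * length U" using assms by simp
  with \<open>N \<le> length U\<close> have "N \<le> n * length U" by (rule le_trans)
  moreover have "real n \<le> Exp (concat (replicate n U))"
    using Exp_ge_length_ratio[OF \<open>U \<noteq> []\<close>, of "concat (replicate n U)"] \<open>U \<noteq> []\<close>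
    by (simp add: length_concat sum_list_replicate frac_pow_mult_length)
  ultimately show "\<exists>m\<ge>N. \<exists>u\<in>Fact m (morph_inf (letter_code n g e) (rounds_word n x)). real n \<le> Exp u"
    using Fact by blast
qed

lemma letter_code_in_inj_morphs:
  assumes "g \<in> \<Gamma>" "e \<in> \<Gamma>" "g \<noteq> e"
  shows "letter_code n g e \<in> inj_morphs {0..<2 * n} \<Gamma>"
  unfolding inj_morphs_def
proof (intro CollectI conjI ballI)
  show "set (letter_code n g e a) \<subseteq> \<Gamma>" for a
    using assms by (auto simp: letter_code_def)
  show "inj_on (morph (letter_code n g e)) (lists {0..<2 * n})"
    by (rule inj_on_morph_uniform[where L = "n + 1"]) (auto simp: length_letter_code inj_on_letter_code assms(3))
qed

lemma le_ACE_I_rounds_word: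
  fixes \<Gamma> :: "nat set"
  assumes "0 < n" "finite \<Gamma>" "2 \<le> card \<Gamma>"
  shows "ereal (real n) \<le> ACE_I {0..<2 * n} \<Gamma> (rounds_word n x)"
proof -
  obtain g e where "g \<in> \<Gamma>" "e \<in> \<Gamma>" "g \<noteq> e"
    using assms(3) card_le_Suc0_iff_eq[OF assms(2)] by force
  then have "letter_code n g e \<in> inj_morphs {0..<2 * n} \<Gamma>" by (rule letter_code_in_inj_morphs)
  moreover have "ereal (real n) \<le> ACE (morph_inf (letter_code n g e) (rounds_word n x))"
    by (rule le_ACE_morph_letter_code_rounds_word[OF assms(1)])
  ultimately show ?thesis unfolding ACE_I_def by (intro SUP_upper2[of "letter_code n g e"])
qed

theorem theorem24:
  fixes n :: nat
  assumes "n \<ge> 1"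
  shows "\<exists>w :: nat \<Rightarrow> nat. range w \<subseteq> {0..<2*n} \<and> ACE w = 1 \<and>
           (\<forall>\<Gamma> :: nat set. finite \<Gamma> \<and> card \<Gamma> \<ge> 2 \<longrightarrow>
              ACE_I {0..<2*n} \<Gamma> w \<ge> ereal (real n))"
proof -
  have "0 < n" using assms by simp
  obtain x :: "nat \<Rightarrow> bool" where x: "bounded_reps rep_bound x"
    using exists_bounded_reps_binary_word by blast
  have "range (rounds_word n x) \<subseteq> {0..<2 * n}" using rounds_word_less[OF \<open>0 < n\<close>] by auto
  moreover have "ACE (rounds_word n x) = 1" by (rule ACE_rounds_word[OF \<open>0 < n\<close> x])
  moreover have "ereal (real n) \<le> ACE_I {0..<2 * n} \<Gamma> (rounds_word n x)"
    if "finite \<Gamma>" "2 \<le> card \<Gamma>" for \<Gamma> :: "nat set"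
    using le_ACE_I_rounds_word[OF \<open>0 < n\<close> that] .
  ultimately show ?thesis by blast
qed

end
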